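(* Let $\mathcal{C}=\{C_1,\dots,C_k\}\subset\mathbb{P}^2_{\mathbb{C}}$ be a $d$-arrangement of $k\geq 4$ smooth curves of degree $d$ with $t_2\neq 0$ and $t_r=0$ for all $r>2$. Then the Levi graph $G$ of $\mathcal{C}$ contains an induced cycle of length $2k$.
   Context: A $d$-arrangement is an arrangement $\mathcal{C}=\{C_1,\dots,C_k\}$ of $k\geq 3$ smooth plane curves all of the same degree $d\geq 1$ such that the singular locus $\mathrm{Sing}(\mathcal{C})$ consists only of ordinary intersection points (locally like intersections of lines). For $r\geq 2$, $t_r$ denotes the number of points of $\mathrm{Sing}(\mathcal{C})$ lying on exactly $r$ curves of $\mathcal{C}$. The Levi graph of $\mathcal{C}$ is the bipartite graph with one vertex for each point $p\in\mathrm{Sing}(\mathcal{C})$, one vertex for each curve $C_j$, and an edge between the vertex of $p$ and the vertex of $C_j$ iff $p\in C_j$. *)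

theory Defs
  imports Complex_Main
begin

text \<open>Homogeneous polynomials of degree d in three variables over the complex numbers are
represented by their coefficient functions on the exponent triples (a,b,c) with a+b+c = d.
Coefficients of other triples are ignored.\<close>

type_synonym cvec3 = "complex \<times> complex \<times> complex"
type_synonym hpoly = "nat \<times> nat \<times> nat \<Rightarrow> complex"

definition hmonos :: "nat \<Rightarrow> (nat \<times> nat \<times> nat) set" where
  "hmonos d = {(a, b, c). a + b + c = d}"

definition hpoly_nonzero :: "nat \<Rightarrow> hpoly \<Rightarrow> bool" where
  "hpoly_nonzero d F \<longleftrightarrow> (\<exists>m\<in>hmonos d. F m \<noteq> 0)"

definition heval :: "nat \<Rightarrow> hpoly \<Rightarrow> cvec3 \<Rightarrow> complex" where
  "heval d F v = (case v of (x, y, z) \<Rightarrow>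
     (\<Sum>(a, b, c)\<in>hmonos d. F (a, b, c) * x ^ a * y ^ b * z ^ c))"

definition hdx :: "nat \<Rightarrow> hpoly \<Rightarrow> cvec3 \<Rightarrow> complex" where
  "hdx d F v = (case v of (x, y, z) \<Rightarrow>
     (\<Sum>(a, b, c)\<in>hmonos d. F (a, b, c) * of_nat a * x ^ (a - 1) * y ^ b * z ^ c))"

definition hdy :: "nat \<Rightarrow> hpoly \<Rightarrow> cvec3 \<Rightarrow> complex" where
  "hdy d F v = (case v of (x, y, z) \<Rightarrow>
     (\<Sum>(a, b, c)\<in>hmonos d. F (a, b, c) * of_nat b * x ^ a * y ^ (b - 1) * z ^ c))"

definition hdz :: "nat \<Rightarrow> hpoly \<Rightarrow> cvec3 \<Rightarrow> complex" where
  "hdz d F v = (case v of (x, y, z) \<Rightarrow>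
     (\<Sum>(a, b, c)\<in>hmonos d. F (a, b, c) * of_nat c * x ^ a * y ^ b * z ^ (c - 1)))"

definition hgrad :: "nat \<Rightarrow> hpoly \<Rightarrow> cvec3 \<Rightarrow> cvec3" where
  "hgrad d F v = (hdx d F v, hdy d F v, hdz d F v)"

definition cscale :: "complex \<Rightarrow> cvec3 \<Rightarrow> cvec3" where
  "cscale c v = (case v of (x, y, z) \<Rightarrow> (c * x, c * y, c * z))"

text \<open>Points of the complex projective plane: the set of nonzero multiples of a nonzero vector.\<close>
definition proj_point :: "cvec3 \<Rightarrow> cvec3 set" where
  "proj_point v = {cscale c v | c. c \<noteq> 0}"

definition zero_locus :: "nat \<Rightarrow> hpoly \<Rightarrow> cvec3 set set" where
  "zero_locus d F = {proj_point v | v. v \<noteq> (0, 0, 0) \<and> heval d F v = 0}"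

definition smooth_curve :: "nat \<Rightarrow> hpoly \<Rightarrow> bool" where
  "smooth_curve d F \<longleftrightarrow> hpoly_nonzero d F \<and>
     (\<forall>v. v \<noteq> (0, 0, 0) \<and> heval d F v = 0 \<longrightarrow> hgrad d F v \<noteq> (0, 0, 0))"

definition arr_sing :: "nat \<Rightarrow> nat \<Rightarrow> (nat \<Rightarrow> hpoly) \<Rightarrow> cvec3 set set" where
  "arr_sing d k F = {p. \<exists>i<k. \<exists>j<k. i \<noteq> j \<and> p \<in> zero_locus d (F i) \<and> p \<in> zero_locus d (F j)}"

definition arr_mult :: "nat \<Rightarrow> nat \<Rightarrow> (nat \<Rightarrow> hpoly) \<Rightarrow> cvec3 set \<Rightarrow> nat" where
  "arr_mult d k F p = card {i. i < k \<and> p \<in> zero_locus d (F i)}"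

definition arr_t :: "nat \<Rightarrow> nat \<Rightarrow> (nat \<Rightarrow> hpoly) \<Rightarrow> nat \<Rightarrow> nat" where
  "arr_t d k F r = card {p \<in> arr_sing d k F. arr_mult d k F p = r}"

text \<open>d-arrangement: k >= 3 distinct smooth curves of degree d >= 1 whose intersection points are
ordinary, i.e. at every common point of two curves their tangent lines are distinct
(gradients not proportional).\<close>
definition d_arrangement :: "nat \<Rightarrow> nat \<Rightarrow> (nat \<Rightarrow> hpoly) \<Rightarrow> bool" where
  "d_arrangement d k F \<longleftrightarrow> d \<ge> 1 \<and> k \<ge> 3 \<and>
     (\<forall>i<k. smooth_curve d (F i)) \<and>
     (\<forall>i<k. \<forall>j<k. i \<noteq> j \<longrightarrow> zero_locus d (F i) \<noteq> zero_locus d (F j)) \<and>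
     (\<forall>i<k. \<forall>j<k. \<forall>v. i \<noteq> j \<and> v \<noteq> (0, 0, 0) \<and> heval d (F i) v = 0 \<and> heval d (F j) v = 0
        \<longrightarrow> (\<forall>c. hgrad d (F i) v \<noteq> cscale c (hgrad d (F j) v)))"

definition levi_verts :: "nat \<Rightarrow> nat \<Rightarrow> (nat \<Rightarrow> hpoly) \<Rightarrow> (cvec3 set + nat) set" where
  "levi_verts d k F = Inl ` arr_sing d k F \<union> Inr ` {..<k}"

definition levi_adj :: "nat \<Rightarrow> nat \<Rightarrow> (nat \<Rightarrow> hpoly) \<Rightarrow> (cvec3 set + nat) \<Rightarrow> (cvec3 set + nat) \<Rightarrow> bool" where
  "levi_adj d k F u w \<longleftrightarrow>
     (\<exists>p j. p \<in> arr_sing d k F \<and> j < k \<and> p \<in> zero_locus d (F j) \<and>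
        ((u = Inl p \<and> w = Inr j) \<or> (u = Inr j \<and> w = Inl p)))"

definition has_induced_cycle :: "'v set \<Rightarrow> ('v \<Rightarrow> 'v \<Rightarrow> bool) \<Rightarrow> nat \<Rightarrow> bool" where
  "has_induced_cycle V adj n \<longleftrightarrow> n \<ge> 3 \<and>
     (\<exists>vs. length vs = n \<and> distinct vs \<and> set vs \<subseteq> V \<and>
        (\<forall>i<n. \<forall>j<n. adj (vs ! i) (vs ! j) \<longleftrightarrow> (j = Suc i mod n \<or> i = Suc j mod n)))"

end

theory Submission
  imports Defs "HOL-Analysis.Analysis" "Jordan_Normal_Form.Determinant"
    "HOL-Computational_Algebra.Fundamental_Theorem_Algebra" "HOL-Computational_Algebra.Field_as_Ring"
begin

text \<open>Any two plane curves of degree \<open>d \<ge> 1\<close> meet: the resultant of their equations with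
  respect to \<open>z\<close> is a binary form of degree \<open>d\<^sup>2\<close> in \<open>x, y\<close>, so it vanishes somewhere on the
  projective line, and above that zero the two curves have a common point. Since the curves of a
  \<open>d\<close>-arrangement meet transversally, their intersection points are isolated, hence finitely many by
  compactness; therefore \<open>t\<^sub>r = 0\<close> for \<open>r > 2\<close> really means that every singular point lies on
  exactly two curves. Choosing \<open>p\<^sub>i \<in> C\<^sub>i \<inter> C\<^sub>i\<^sub>+\<^sub>1\<close> (indices modulo \<open>k\<close>), the vertices
  \<open>C\<^sub>0, p\<^sub>0, C\<^sub>1, p\<^sub>1, \<dots>, C\<^sub>k\<^sub>-\<^sub>1, p\<^sub>k\<^sub>-\<^sub>1\<close> then form an induced cycle of length \<open>2k\<close> in the Levi graph.\<close>

section \<open>Homogeneous forms\<close>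

lemma finite_hmonos: "finite (hmonos d)"
proof -
  have "hmonos d \<subseteq> {0..d} \<times> {0..d} \<times> {0..d}" unfolding hmonos_def by auto
  then show ?thesis by (rule finite_subset) auto
qed

lemma heval_cscale: "heval d F (cscale c v) = c ^ d * heval d F v"
proof -
  obtain x y z where v: "v = (x, y, z)" by (cases v)
  have scale: "F (a, b, e) * (c * x) ^ a * (c * y) ^ b * (c * z) ^ e = c ^ d * (F (a, b, e) * x ^ a * y ^ b * z ^ e)"
    if "(a, b, e) \<in> hmonos d" for a b e
  proof -
    have "d = a + b + e" using that by (simp add: hmonos_def)
    then show ?thesis by (simp add: power_mult_distrib power_add mult_ac)
  qed
  then show ?thesis
    unfolding heval_def cscale_def v by (simp add: sum_distrib_left) (intro sum.cong; auto)
qed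

lemma cscale_cscale [simp]: "cscale a (cscale c w) = cscale (a * c) w"
  by (cases w) (simp add: cscale_def)

lemma cscale_1 [simp]: "cscale 1 w = w"
  by (cases w) (simp add: cscale_def)

lemma norm_cscale: "norm (cscale c w) = cmod c * norm w"
proof -
  obtain x y z where "w = (x, y, z)" by (cases w)
  then have "norm (cscale c w) ^ 2 = (cmod c * norm w) ^ 2"
    by (simp add: cscale_def norm_Pair norm_mult power_mult_distrib algebra_simps)
  then show ?thesis by (simp add: power2_eq_iff_nonneg)
qed

definition cdot :: "cvec3 \<Rightarrow> cvec3 \<Rightarrow> complex" where
  "cdot a w = fst a * fst w + fst (snd a) * fst (snd w) + snd (snd a) * snd (snd w)"

definition cinner :: "cvec3 \<Rightarrow> cvec3 \<Rightarrow> complex" where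
  "cinner u w = cnj (fst u) * fst w + cnj (fst (snd u)) * fst (snd w) + cnj (snd (snd u)) * snd (snd w)"

lemma cdot_simps [simp]: "cdot (a1, a2, a3) (w1, w2, w3) = a1 * w1 + a2 * w2 + a3 * w3"
  by (simp add: cdot_def)

lemma cinner_simps [simp]: "cinner (u1, u2, u3) (w1, w2, w3) = cnj u1 * w1 + cnj u2 * w2 + cnj u3 * w3"
  by (simp add: cinner_def)

lemma cinner_cscale: "cinner u (cscale c w) = c * cinner u w"
  by (cases u, cases w) (simp add: cscale_def algebra_simps)

lemma cinner_self: "cinner u u = complex_of_real (norm u ^ 2)"
proof -
  have "cnj z * z = complex_of_real (cmod z ^ 2)" for z
    by (metis complex_norm_square mult.commute)
  then show ?thesis by (cases u) (simp add: norm_Pair)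
qed

lemma cinner_has_derivative: "(cinner u has_derivative cinner u) (at w)"
  unfolding cinner_def [abs_def] by (auto intro!: derivative_eq_intros)

lemma heval_has_derivative: "(heval d F has_derivative cdot (hgrad d F u)) (at u)"
proof -
  define mono where "mono m w = F m * fst w ^ fst m * fst (snd w) ^ fst (snd m) * snd (snd w) ^ snd (snd m)"
    for m and w :: cvec3
  define mono' where "mono' m h = F m * of_nat (fst m) * fst u ^ (fst m - 1) * fst (snd u) ^ fst (snd m) * snd (snd u) ^ snd (snd m) * fst h
       + F m * of_nat (fst (snd m)) * fst u ^ fst m * fst (snd u) ^ (fst (snd m) - 1) * snd (snd u) ^ snd (snd m) * fst (snd h)
       + F m * of_nat (snd (snd m)) * fst u ^ fst m * fst (snd u) ^ fst (snd m) * snd (snd u) ^ (snd (snd m) - 1) * snd (snd h)"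
    for m and h :: cvec3
  have "(mono m has_derivative mono' m) (at u)" for m
    unfolding mono_def [abs_def] mono'_def [abs_def]
    by (auto intro!: derivative_eq_intros simp: algebra_simps)
  then have "((\<lambda>w. \<Sum>m\<in>hmonos d. mono m w) has_derivative (\<lambda>h. \<Sum>m\<in>hmonos d. mono' m h)) (at u)"
    by (rule has_derivative_sum)
  moreover have "heval d F = (\<lambda>w. \<Sum>m\<in>hmonos d. mono m w)"
    by (auto simp: heval_def mono_def case_prod_unfold)
  moreover have "cdot (hgrad d F u) = (\<lambda>h. \<Sum>m\<in>hmonos d. mono' m h)"
    by (auto simp: cdot_def hgrad_def hdx_def hdy_def hdz_def mono'_def case_prod_unfold
        sum_distrib_right sum.distrib)
  ultimately show ?thesis by simp
qed

lemma continuous_on_heval: "continuous_on S (heval d F)"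
  by (meson continuous_at_imp_continuous_on has_derivative_continuous heval_has_derivative)

lemma euler_identity: "cdot (hgrad d F v) v = of_nat d * heval d F v"
proof -
  obtain x y z where v: "v = (x, y, z)" by (cases v)
  have power_step: "w * (of_nat n * w ^ (n - 1)) = of_nat n * w ^ n" for w :: complex and n
    by (cases n) auto
  have "F (a, b, c) * of_nat a * x ^ (a - 1) * y ^ b * z ^ c * x
      + F (a, b, c) * of_nat b * x ^ a * y ^ (b - 1) * z ^ c * y
      + F (a, b, c) * of_nat c * x ^ a * y ^ b * z ^ (c - 1) * z
      = of_nat d * (F (a, b, c) * x ^ a * y ^ b * z ^ c)"
    if "(a, b, c) \<in> hmonos d" for a b c
  proof -
    have "F (a, b, c) * of_nat a * x ^ (a - 1) * y ^ b * z ^ c * x = F (a, b, c) * y ^ b * z ^ c * (x * (of_nat a * x ^ (a - 1)))"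
      "F (a, b, c) * of_nat b * x ^ a * y ^ (b - 1) * z ^ c * y = F (a, b, c) * x ^ a * z ^ c * (y * (of_nat b * y ^ (b - 1)))"
      "F (a, b, c) * of_nat c * x ^ a * y ^ b * z ^ (c - 1) * z = F (a, b, c) * x ^ a * y ^ b * (z * (of_nat c * z ^ (c - 1)))"
      by (simp_all only: ac_simps)
    moreover have "d = a + b + c" using that by (simp add: hmonos_def)
    ultimately show ?thesis by (simp only: power_step) (simp add: algebra_simps)
  qed
  then show ?thesis
    unfolding v hgrad_def hdx_def hdy_def hdz_def heval_def cdot_simps prod.case
    by (simp only: sum_distrib_right sum_distrib_left sum.distrib [symmetric])
      (rule sum.cong [OF refl], clarsimp simp only: prod.case)
qed

lemma proj_point_self: "v \<in> proj_point v"
  unfolding proj_point_def by (auto intro: exI [of _ 1])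

lemma proj_point_cscale:
  assumes "c \<noteq> 0"
  shows "proj_point (cscale c v) = proj_point v"
proof
  show "proj_point (cscale c v) \<subseteq> proj_point v"
    unfolding proj_point_def using assms by auto
  show "proj_point v \<subseteq> proj_point (cscale c v)"
  proof
    fix w assume "w \<in> proj_point v"
    then obtain a where "a \<noteq> 0" "w = cscale a v" unfolding proj_point_def by auto
    then have "a / c \<noteq> 0" "w = cscale (a / c) (cscale c v)" using assms by simp_all
    then show "w \<in> proj_point (cscale c v)" unfolding proj_point_def by blast
  qed
qed

lemma proj_point_eqD: "proj_point v = proj_point w \<Longrightarrow> \<exists>c. c \<noteq> 0 \<and> v = cscale c w"
  using proj_point_self [of v] unfolding proj_point_def by auto

lemma heval_eq_0_if_in_zero_locus:
  assumes "proj_point w \<in> zero_locus d F"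
  shows "heval d F w = 0"
proof -
  obtain v where v: "proj_point w = proj_point v" "heval d F v = 0"
    using assms unfolding zero_locus_def by auto
  then obtain c where "w = cscale c v" using proj_point_eqD by blast
  then show ?thesis using v(2) by (simp add: heval_cscale)
qed

section \<open>Two plane curves always meet\<close>

definition zcoeff :: "nat \<Rightarrow> hpoly \<Rightarrow> nat \<Rightarrow> complex \<Rightarrow> complex \<Rightarrow> complex" where
  "zcoeff d F k x y = (\<Sum>m\<in>{m\<in>hmonos d. snd (snd m) = k}. F m * x ^ fst m * y ^ fst (snd m))"

definition zpoly :: "nat \<Rightarrow> hpoly \<Rightarrow> complex \<Rightarrow> complex \<Rightarrow> complex poly" where
  "zpoly d F x y = (\<Sum>k\<le>d. monom (zcoeff d F k x y) k)"

lemma coeff_zpoly: "coeff (zpoly d F x y) k = (if k \<le> d then zcoeff d F k x y else 0)"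
  unfolding zpoly_def by (simp add: coeff_sum coeff_monom)

lemma degree_zpoly: "degree (zpoly d F x y) \<le> d"
  by (rule degree_le) (simp add: coeff_zpoly)

lemma lead_coeff_zpoly: "coeff (zpoly d F x y) d = F (0, 0, d)"
proof -
  have "{m\<in>hmonos d. snd (snd m) = d} = {(0, 0, d)}" by (auto simp: hmonos_def)
  then show ?thesis by (simp add: coeff_zpoly zcoeff_def)
qed

lemma poly_zpoly: "poly (zpoly d F x y) z = heval d F (x, y, z)"
proof -
  have "poly (zpoly d F x y) z =
      (\<Sum>k\<le>d. \<Sum>m\<in>{m\<in>hmonos d. snd (snd m) = k}. F m * x ^ fst m * y ^ fst (snd m) * z ^ snd (snd m))"
    unfolding zpoly_def zcoeff_def by (simp add: poly_sum poly_monom sum_distrib_right)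
  also have "\<dots> = (\<Sum>m\<in>hmonos d. F m * x ^ fst m * y ^ fst (snd m) * z ^ snd (snd m))"
    by (rule sum.group [OF finite_hmonos finite_atMost]) (auto simp: hmonos_def)
  also have "\<dots> = heval d F (x, y, z)"
    unfolding heval_def by (simp add: case_prod_unfold)
  finally show ?thesis .
qed

lemma zcoeff_mult: "zcoeff d F k (l * x) (l * y) = l ^ (d - k) * zcoeff d F k x y"
  unfolding zcoeff_def sum_distrib_left
proof (rule sum.cong [OF refl])
  fix m assume "m \<in> {m\<in>hmonos d. snd (snd m) = k}"
  then have "d - k = fst m + fst (snd m)" by (auto simp: hmonos_def)
  then show "F m * (l * x) ^ fst m * (l * y) ^ fst (snd m) = l ^ (d - k) * (F m * x ^ fst m * y ^ fst (snd m))"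
    by (simp add: power_mult_distrib power_add mult_ac)
qed

text \<open>Coefficients are listed in ascending order, so a vector in the left kernel of the
  Sylvester matrix yields \<open>A p + B q = 0\<close> with \<open>deg A, deg B < d\<close>.\<close>

definition sylvester_row :: "nat \<Rightarrow> 'a::comm_semiring_1 poly \<Rightarrow> 'a poly \<Rightarrow> nat \<Rightarrow> 'a poly" where
  "sylvester_row d p q i = (if i < d then monom 1 i * p else monom 1 (i - d) * q)"

definition sylvester :: "nat \<Rightarrow> 'a::comm_semiring_1 poly \<Rightarrow> 'a poly \<Rightarrow> 'a mat" where
  "sylvester d p q = mat (2 * d) (2 * d) (\<lambda>(i, j). coeff (sylvester_row d p q i) j)"

lemma sylvester_carrier: "sylvester d p q \<in> carrier_mat (2 * d) (2 * d)"
  by (simp add: sylvester_def)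

lemma degree_sylvester_row:
  assumes "degree p \<le> d" "degree q \<le> d" "i < 2 * d"
  shows "degree (sylvester_row d p q i) < 2 * d"
proof -
  have "degree (monom (1::'a) n * r) \<le> n + degree r" for n and r :: "'a poly"
    by (metis degree_monom_le degree_mult_le le_trans add_le_mono1)
  then show ?thesis
    using assms unfolding sylvester_row_def
    by (cases "i < d") (fastforce intro: le_less_trans)+
qed

lemma no_common_root_imp_coprime:
  fixes p q :: "complex poly"
  assumes "p \<noteq> 0" "\<nexists>t. poly p t = 0 \<and> poly q t = 0"
  shows "coprime p q"
proof -
  have "degree (gcd p q) = 0"
  proof (rule ccontr)
    assume "degree (gcd p q) \<noteq> 0"
    then have "\<not> constant (poly (gcd p q))" by (simp add: constant_degree)
    then obtain t where "poly (gcd p q) t = 0" using fundamental_theorem_of_algebra by blast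
    then have "[:-t, 1:] dvd p" "[:-t, 1:] dvd q"
      by (auto simp: poly_eq_0_iff_dvd intro: dvd_trans)
    then show False using assms(2) poly_eq_0_iff_dvd by blast
  qed
  then show ?thesis using assms(1) is_unit_gcd is_unit_iff_degree by (metis gcd_eq_0_iff)
qed

lemma sum_lessThan_double: "(\<Sum>i<2 * (n::nat). f i) = (\<Sum>i<n. f i) + (\<Sum>i<n. f (i + n))"
proof -
  have "(\<Sum>i<2 * n. f i) = sum f {0..<n} + sum f {0 + n..<n + n}"
    by (simp add: mult_2 atLeast0LessThan [symmetric] sum.atLeastLessThan_concat)
  then show ?thesis by (simp only: sum.shift_bounds_nat_ivl atLeast0LessThan)
qed

lemma sylvester_det_eq_0_imp_linear_relation:
  fixes p q :: "'a::idom poly"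
  assumes "degree p \<le> d" "degree q \<le> d" "0 < d" "Determinant.det (sylvester d p q) = 0"
  shows "\<exists>A B. (A \<noteq> 0 \<or> B \<noteq> 0) \<and> degree A < d \<and> A * p + B * q = 0"
proof -
  have "Determinant.det (transpose_mat (sylvester d p q)) = 0"
    using assms(4) by (simp add: det_transpose [OF sylvester_carrier])
  then obtain v where v: "v \<in> carrier_vec (2 * d)" "v \<noteq> 0\<^sub>v (2 * d)"
    "transpose_mat (sylvester d p q) *\<^sub>v v = 0\<^sub>v (2 * d)"
    using det_0_iff_vec_prod_zero [of _ "2 * d"] sylvester_carrier by (metis transpose_carrier_mat)
  define A where "A = (\<Sum>i<d. monom (v $ i) i)"
  define B where "B = (\<Sum>i<d. monom (v $ (d + i)) i)"
  have "A * p + B * q = (\<Sum>i<2 * d. Polynomial.smult (v $ i) (sylvester_row d p q i))"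
    unfolding sum_lessThan_double A_def B_def sum_distrib_right
    by (simp add: smult_monom_mult sylvester_row_def add.commute)
  also have "\<dots> = 0"
  proof (rule poly_eqI)
    fix j
    show "coeff (\<Sum>i<2 * d. Polynomial.smult (v $ i) (sylvester_row d p q i)) j = coeff 0 j"
    proof (cases "j < 2 * d")
      case True
      have "(transpose_mat (sylvester d p q) *\<^sub>v v) $ j = (\<Sum>i<2 * d. v $ i * coeff (sylvester_row d p q i) j)"
        using True v(1) unfolding sylvester_def
        by (auto simp: scalar_prod_def atLeast0LessThan mult.commute intro!: sum.cong)
      then show ?thesis using True v(3) by (simp add: coeff_sum)
    next
      case False
      have "coeff (sylvester_row d p q i) j = 0" if "i < 2 * d" for i
        using degree_sylvester_row [OF assms(1,2) that] False by (intro coeff_eq_0) simp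
      then show ?thesis by (simp add: coeff_sum)
    qed
  qed
  finally have "A * p + B * q = 0" .
  moreover have "A \<noteq> 0 \<or> B \<noteq> 0"
  proof -
    obtain i where i: "i < 2 * d" "v $ i \<noteq> 0"
      using v(1,2) by (metis carrier_vecD eq_vecI index_zero_vec(1,2))
    then have "coeff A i \<noteq> 0 \<or> coeff B (i - d) \<noteq> 0"
      by (cases "i < d") (auto simp: A_def B_def coeff_sum coeff_monom)
    then show ?thesis by auto
  qed
  moreover have "degree A \<le> d - 1"
    unfolding A_def by (intro degree_sum_le) (auto intro: order.trans [OF degree_monom_le])
  then have "degree A < d" using assms(3) by linarith
  ultimately show ?thesis by blast
qed

lemma sylvester_det_eq_0_imp_common_root:
  fixes p q :: "complex poly"
  assumes "degree p \<le> d" "degree q = d" "0 < d" "Determinant.det (sylvester d p q) = 0"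
  shows "\<exists>t. poly p t = 0 \<and> poly q t = 0"
proof (rule ccontr)
  assume no_root: "\<nexists>t. poly p t = 0 \<and> poly q t = 0"
  obtain A B where AB: "A \<noteq> 0 \<or> B \<noteq> 0" "degree A < d" "A * p + B * q = 0"
    using sylvester_det_eq_0_imp_linear_relation [OF assms(1) _ assms(3,4)] assms(2) by auto
  have "q \<noteq> 0" using assms(2,3) by auto
  then have "coprime q p" using no_common_root_imp_coprime [of q p] no_root by blast
  moreover have "A * p = - (B * q)" using AB(3) by (simp add: eq_neg_iff_add_eq_0)
  then have "q dvd A * p" by simp
  ultimately have "q dvd A" by (simp add: coprime_dvd_mult_left_iff)
  have "A = 0"
  proof (rule ccontr)
    assume "A \<noteq> 0"
    with \<open>q dvd A\<close> have "degree q \<le> degree A" by (rule dvd_imp_degree_le)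
    then show False using AB(2) assms(2) by simp
  qed
  then show False using AB \<open>q \<noteq> 0\<close> by simp
qed

definition is_polyfun :: "(complex \<Rightarrow> complex) \<Rightarrow> bool" where
  "is_polyfun f \<longleftrightarrow> (\<exists>p. \<forall>z. f z = poly p z)"

lemma is_polyfun_const [intro]: "is_polyfun (\<lambda>z. c)"
  unfolding is_polyfun_def by (rule exI [of _ "[:c:]"]) simp

lemma is_polyfun_id [intro]: "is_polyfun (\<lambda>z. z)"
  unfolding is_polyfun_def by (rule exI [of _ "[:0, 1:]"]) simp

lemma is_polyfun_add [intro]: "is_polyfun f \<Longrightarrow> is_polyfun g \<Longrightarrow> is_polyfun (\<lambda>z. f z + g z)"
  unfolding is_polyfun_def by (metis poly_add)

lemma is_polyfun_mult [intro]: "is_polyfun f \<Longrightarrow> is_polyfun g \<Longrightarrow> is_polyfun (\<lambda>z. f z * g z)"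
  unfolding is_polyfun_def by (metis poly_mult)

lemma is_polyfun_power [intro]: "is_polyfun f \<Longrightarrow> is_polyfun (\<lambda>z. f z ^ n)"
  by (induction n) auto

lemma is_polyfun_sum [intro]: "(\<And>i. i \<in> A \<Longrightarrow> is_polyfun (f i)) \<Longrightarrow> is_polyfun (\<lambda>z. \<Sum>i\<in>A. f i z)"
  by (induction A rule: infinite_finite_induct) auto

lemma is_polyfun_prod [intro]: "(\<And>i. i \<in> A \<Longrightarrow> is_polyfun (f i)) \<Longrightarrow> is_polyfun (\<lambda>z. \<Prod>i\<in>A. f i z)"
  by (induction A rule: infinite_finite_induct) auto

lemma is_polyfun_if [intro]: "is_polyfun f \<Longrightarrow> is_polyfun g \<Longrightarrow> is_polyfun (\<lambda>z. if P then f z else g z)"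
  by (cases P) auto

lemma poly_eq_if_eq_off_point:
  fixes p q :: "complex poly"
  assumes "\<And>x. x \<noteq> a \<Longrightarrow> poly p x = poly q x"
  shows "p = q"
proof (rule ccontr)
  assume "p \<noteq> q"
  then have "finite {x. poly (p - q) x = 0}" by (intro poly_roots_finite) simp
  moreover have "UNIV - {a} \<subseteq> {x. poly (p - q) x = 0}" using assms by auto
  ultimately have "finite (UNIV - {a})" by (rule finite_subset [rotated])
  then show False by (simp add: infinite_UNIV_char_0)
qed

definition hresultant :: "nat \<Rightarrow> hpoly \<Rightarrow> hpoly \<Rightarrow> complex \<Rightarrow> complex \<Rightarrow> complex" where
  "hresultant d F G x y = Determinant.det (sylvester d (zpoly d F x y) (zpoly d G x y))"

lemma hresultant_eq_0_imp_common_zero: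
  assumes "0 < d" "G (0, 0, d) \<noteq> 0" "hresultant d F G x y = 0"
  shows "\<exists>z. heval d F (x, y, z) = 0 \<and> heval d G (x, y, z) = 0"
proof -
  have deg_G: "degree (zpoly d G x y) = d"
    using assms(2) degree_zpoly [of d G x y] le_degree [of "zpoly d G x y" d] by (simp add: lead_coeff_zpoly)
  then have "\<exists>t. poly (zpoly d F x y) t = 0 \<and> poly (zpoly d G x y) t = 0"
    using sylvester_det_eq_0_imp_common_root [OF degree_zpoly deg_G assms(1)] assms(3)
    unfolding hresultant_def by blast
  then show ?thesis by (simp add: poly_zpoly)
qed

lemma coeff_sylvester_row_zpoly:
  "coeff (sylvester_row d (zpoly d F x y) (zpoly d G x y) i) j =
    (let n = if i < d then i else i - d; H = if i < d then F else G
     in if n \<le> j \<and> j - n \<le> d then zcoeff d H (j - n) x y else 0)"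
  by (auto simp: sylvester_row_def coeff_monom_mult coeff_zpoly Let_def)

text \<open>Entry \<open>(i, j)\<close> is homogeneous of degree \<open>d + n\<^sub>i - j\<close>, whence the resultant is homogeneous
  of degree \<open>\<Sum>\<^sub>i (d + n\<^sub>i) - \<Sum>\<^sub>j j = d\<^sup>2\<close>.\<close>

lemma coeff_sylvester_row_zpoly_mult:
  "l ^ j * coeff (sylvester_row d (zpoly d F (l * x) (l * y)) (zpoly d G (l * x) (l * y)) i) j =
    l ^ (d + (if i < d then i else i - d)) * coeff (sylvester_row d (zpoly d F x y) (zpoly d G x y) i) j"
proof -
  have "l ^ j * l ^ (d - (j - n)) = l ^ (d + n)" if "n \<le> j" "j - n \<le> d" for n
    using that by (simp add: power_add [symmetric])
  then show ?thesis
    unfolding coeff_sylvester_row_zpoly by (simp add: Let_def zcoeff_mult mult.assoc [symmetric])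
qed

lemma hresultant_mult:
  assumes "l \<noteq> 0"
  shows "hresultant d F G (l * x) (l * y) = l ^ (d * d) * hresultant d F G x y"
proof -
  let ?M = "\<lambda>x y. sylvester d (zpoly d F x y) (zpoly d G x y)"
  let ?n = "\<lambda>i. if i < d then i else i - d"
  have "(\<Prod>i<2 * d. ?M (l * x) (l * y) $$ (i, \<sigma> i)) = l ^ (d * d) * (\<Prod>i<2 * d. ?M x y $$ (i, \<sigma> i))"
    if "\<sigma> permutes {..<2 * d}" for \<sigma>
  proof -
    have \<sigma>: "\<sigma> i < 2 * d" if "i < 2 * d" for i using that \<open>\<sigma> permutes _\<close> permutes_in_image by fastforce
    have "(\<Sum>i<2 * d. \<sigma> i) = (\<Sum>i<2 * d. i)"
      using sum.permute [OF that, of id] by (simp add: comp_def)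
    also have "\<dots> + d * d = (\<Sum>i<2 * d. d + ?n i)"
      by (simp add: sum_lessThan_double sum.distrib)
    finally have exps: "(\<Sum>i<2 * d. \<sigma> i) + d * d = (\<Sum>i<2 * d. d + ?n i)" .
    have "l ^ (\<Sum>i<2 * d. \<sigma> i) * (\<Prod>i<2 * d. ?M (l * x) (l * y) $$ (i, \<sigma> i))
        = (\<Prod>i<2 * d. l ^ \<sigma> i * ?M (l * x) (l * y) $$ (i, \<sigma> i))"
      by (simp add: power_sum prod.distrib)
    also have "\<dots> = (\<Prod>i<2 * d. l ^ (d + ?n i) * ?M x y $$ (i, \<sigma> i))"
      using \<sigma> by (intro prod.cong) (simp_all add: sylvester_def coeff_sylvester_row_zpoly_mult)
    also have "\<dots> = l ^ (\<Sum>i<2 * d. d + ?n i) * (\<Prod>i<2 * d. ?M x y $$ (i, \<sigma> i))"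
      by (simp add: prod.distrib power_sum)
    also have "\<dots> = l ^ (\<Sum>i<2 * d. \<sigma> i) * (l ^ (d * d) * (\<Prod>i<2 * d. ?M x y $$ (i, \<sigma> i)))"
      by (simp only: exps [symmetric] power_add mult.assoc)
    finally show ?thesis using assms by simp
  qed
  then show ?thesis
    unfolding hresultant_def det_def' [OF sylvester_carrier] atLeast0LessThan
    by (simp add: sum_distrib_left mult.left_commute)
qed

lemma is_polyfun_hresultant:
  assumes "is_polyfun X" "is_polyfun Y"
  shows "is_polyfun (\<lambda>z. hresultant d F G (X z) (Y z))"
proof -
  have zcoeff: "is_polyfun (\<lambda>z. zcoeff d H k (X z) (Y z))" for H k
    unfolding zcoeff_def using assms by (intro is_polyfun_sum is_polyfun_mult is_polyfun_power) auto
  have "is_polyfun (\<lambda>z. sylvester d (zpoly d F (X z) (Y z)) (zpoly d G (X z) (Y z)) $$ (i, j))"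
    if "i < 2 * d" "j < 2 * d" for i j
    using that by (auto simp: sylvester_def coeff_sylvester_row_zpoly Let_def intro!: is_polyfun_if zcoeff)
  then show ?thesis
    unfolding hresultant_def det_def' [OF sylvester_carrier]
    by (intro is_polyfun_sum is_polyfun_mult is_polyfun_prod is_polyfun_const)
      (auto simp: permutes_in_image)
qed

lemma heval_001: "heval d F (0, 0, 1) = F (0, 0, d)"
proof -
  have "heval d F (0, 0, 1) = (\<Sum>m\<in>hmonos d. if m = (0, 0, d) then F m else 0)"
    unfolding heval_def by (auto simp: hmonos_def intro!: sum.cong)
  also have "\<dots> = F (0, 0, d)" by (simp add: finite_hmonos) (simp add: hmonos_def)
  finally show ?thesis .
qed

lemma common_zero_if_lead_coeff_nonzero:
  assumes "0 < d" and G: "G (0, 0, d) \<noteq> 0"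
  shows "\<exists>v. v \<noteq> (0, 0, 0) \<and> heval d F v = 0 \<and> heval d G v = 0"
proof (cases "\<exists>y. hresultant d F G 1 y = 0")
  case True
  then obtain y z where "heval d F (1, y, z) = 0" "heval d G (1, y, z) = 0"
    using hresultant_eq_0_imp_common_zero [of d G F, OF assms] by blast
  then show ?thesis by (intro exI [of _ "(1, y, z)"]) simp
next
  case False
  obtain p where p: "\<And>y. hresultant d F G 1 y = poly p y"
    using is_polyfun_hresultant [OF is_polyfun_const is_polyfun_id] unfolding is_polyfun_def by blast
  define c where "c = hresultant d F G 1 0"
  have "constant (poly p)"
  proof (rule ccontr)
    assume "\<not> constant (poly p)"
    then obtain y where "poly p y = 0" using fundamental_theorem_of_algebra by blast
    then show False using False p by simp
  qed
  then have const: "hresultant d F G 1 y = c" for y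
    unfolding c_def p constant_def by blast
  obtain q where q: "\<And>x. hresultant d F G x 1 = poly q x"
    using is_polyfun_hresultant [OF is_polyfun_id is_polyfun_const] unfolding is_polyfun_def by blast
  have "poly q x = poly (monom c (d * d)) x" if "x \<noteq> 0" for x
  proof -
    have "poly q x = hresultant d F G (x * 1) (x * (1 / x))" using q that by simp
    also have "\<dots> = x ^ (d * d) * hresultant d F G 1 (1 / x)" by (rule hresultant_mult [OF that])
    also have "\<dots> = x ^ (d * d) * c" using const by simp
    finally show ?thesis by (simp add: poly_monom mult.commute)
  qed
  then have "q = monom c (d * d)" by (rule poly_eq_if_eq_off_point)
  then have "hresultant d F G 0 1 = 0" using q \<open>0 < d\<close> by (simp add: poly_monom)
  then obtain z where "heval d F (0, 1, z) = 0" "heval d G (0, 1, z) = 0"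
    using hresultant_eq_0_imp_common_zero [of d G F, OF assms] by blast
  then show ?thesis by (intro exI [of _ "(0, 1, z)"]) simp
qed

lemma plane_curves_meet:
  assumes "0 < d"
  shows "\<exists>v. v \<noteq> (0, 0, 0) \<and> heval d F v = 0 \<and> heval d G v = 0"
proof -
  consider "G (0, 0, d) \<noteq> 0" | "F (0, 0, d) \<noteq> 0" | "F (0, 0, d) = 0" "G (0, 0, d) = 0" by blast
  then show ?thesis
  proof cases
    case 1
    then show ?thesis using common_zero_if_lead_coeff_nonzero [OF assms] by blast
  next
    case 2
    then show ?thesis using common_zero_if_lead_coeff_nonzero [OF assms, of F G] by blast
  next
    case 3
    then show ?thesis by (intro exI [of _ "(0, 0, 1)"]) (simp add: heval_001)
  qed
qed

section \<open>Transversal intersections are finite\<close>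

lemma has_derivative_injective_imp_isolated:
  fixes f :: "'a::euclidean_space \<Rightarrow> 'b::euclidean_space"
  assumes "(f has_derivative D) (at u)" and "\<And>h. D h = 0 \<Longrightarrow> h = 0"
  shows "\<forall>\<^sub>F w in nhds u. f w = f u \<longrightarrow> w = u"
proof -
  have "linear D" using assms(1) has_derivative_linear by blast
  moreover have "inj D" using linear_injective_0 [OF \<open>linear D\<close>] assms(2) by blast
  ultimately obtain B where B: "B > 0" "\<And>x. B * norm x \<le> norm (D x)"
    using linear_inj_bounded_below_pos by blast
  obtain \<delta> where "\<delta> > 0" and \<delta>: "\<And>w. norm (w - u) < \<delta> \<Longrightarrow> norm (f w - f u - D (w - u)) \<le> B / 2 * norm (w - u)"
    using assms(1) B(1) unfolding has_derivative_at_alt by (metis half_gt_zero)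
  have "w = u" if "dist w u < \<delta>" "f w = f u" for w
  proof -
    have "B * norm (w - u) \<le> B / 2 * norm (w - u)"
      using \<delta> [of w] B(2) [of "w - u"] that by (simp add: dist_norm)
    then show ?thesis using B(1) by simp
  qed
  then show ?thesis unfolding eventually_nhds_metric using \<open>\<delta> > 0\<close> by blast
qed

lemma finite_image_if_locally_constant:
  fixes K :: "'a::metric_space set"
  assumes "compact K" and "\<And>u. u \<in> K \<Longrightarrow> \<forall>\<^sub>F w in at u. w \<in> K \<longrightarrow> g w = g u"
  shows "finite (g ` K)"
proof -
  have "\<exists>\<epsilon>>0. \<forall>w\<in>K. dist w u < \<epsilon> \<longrightarrow> g w = g u" if "u \<in> K" for u
    using assms(2) [OF that] unfolding eventually_at by (metis UNIV_I)
  then obtain \<epsilon> where \<epsilon>: "\<And>u. u \<in> K \<Longrightarrow> \<epsilon> u > 0"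
    "\<And>u w. u \<in> K \<Longrightarrow> w \<in> K \<Longrightarrow> dist w u < \<epsilon> u \<Longrightarrow> g w = g u"
    by metis
  have "K \<subseteq> (\<Union>u\<in>K. ball u (\<epsilon> u))" using \<epsilon>(1) by force
  then obtain K' where K': "K' \<subseteq> K" "finite K'" "K \<subseteq> (\<Union>u\<in>K'. ball u (\<epsilon> u))"
    using compactE_image [OF assms(1), of K "\<lambda>u. ball u (\<epsilon> u)"] by blast
  have "g ` K \<subseteq> g ` K'"
  proof
    fix p assume "p \<in> g ` K"
    then obtain w where "w \<in> K" "p = g w" by blast
    then obtain u where "u \<in> K'" "dist u w < \<epsilon> u" using K'(3) by auto
    then show "p \<in> g ` K'" using \<epsilon>(2) [of u w] K'(1) \<open>w \<in> K\<close> \<open>p = g w\<close> by (auto simp: dist_commute)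
  qed
  then show ?thesis using K'(2) finite_subset by blast
qed

definition ccross :: "cvec3 \<Rightarrow> cvec3 \<Rightarrow> cvec3" where
  "ccross a b = (fst (snd a) * snd (snd b) - snd (snd a) * fst (snd b),
     snd (snd a) * fst b - fst a * snd (snd b), fst a * fst (snd b) - fst (snd a) * fst b)"

lemma ccross_simps [simp]:
  "ccross (a1, a2, a3) (b1, b2, b3) = (a2 * b3 - a3 * b2, a3 * b1 - a1 * b3, a1 * b2 - a2 * b1)"
  by (simp add: ccross_def)

lemma ccross_eq_0_imp_parallel:
  assumes "ccross a b = (0, 0, 0)" and "b \<noteq> (0, 0, 0)"
  shows "\<exists>c. a = cscale c b"
proof -
  obtain a1 a2 a3 b1 b2 b3 where ab: "a = (a1, a2, a3)" "b = (b1, b2, b3)" by (cases a, cases b)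
  consider "b1 \<noteq> 0" | "b2 \<noteq> 0" | "b3 \<noteq> 0" using assms(2) ab by auto
  then show ?thesis
  proof cases
    case 1
    then show ?thesis using assms(1) ab by (intro exI [of _ "a1 / b1"]) (auto simp: cscale_def field_simps)
  next
    case 2
    then show ?thesis using assms(1) ab by (intro exI [of _ "a2 / b2"]) (auto simp: cscale_def field_simps)
  next
    case 3
    then show ?thesis using assms(1) ab by (intro exI [of _ "a3 / b3"]) (auto simp: cscale_def field_simps)
  qed
qed

text \<open>The expansion \<open>w \<times> (a \<times> b) = (w\<cdot>b) a - (w\<cdot>a) b\<close>.\<close>

lemma ccross_ccross_eq_0:
  assumes "cdot a w = 0" and "cdot b w = 0"
  shows "ccross w (ccross a b) = (0, 0, 0)"
proof -
  obtain a1 a2 a3 b1 b2 b3 w1 w2 w3 where "a = (a1, a2, a3)" "b = (b1, b2, b3)" "w = (w1, w2, w3)"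
    by (cases a, cases b, cases w)
  moreover have "ccross (w1, w2, w3) (ccross (a1, a2, a3) (b1, b2, b3)) =
      (a1 * cdot (b1, b2, b3) (w1, w2, w3) - b1 * cdot (a1, a2, a3) (w1, w2, w3),
       a2 * cdot (b1, b2, b3) (w1, w2, w3) - b2 * cdot (a1, a2, a3) (w1, w2, w3),
       a3 * cdot (b1, b2, b3) (w1, w2, w3) - b3 * cdot (a1, a2, a3) (w1, w2, w3))"
    by (simp add: algebra_simps)
  ultimately show ?thesis using assms by simp
qed

lemma cinner_cscale_left: "cinner (cscale c u) w = cnj c * cinner u w"
  by (cases u, cases w) (simp add: cscale_def algebra_simps)

lemma cinner_self_eq_0_iff: "cinner u u = 0 \<longleftrightarrow> u = (0, 0, 0)"
  by (simp add: cinner_self flip: zero_prod_def)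

text \<open>If \<open>a\<close> and \<open>b\<close> are not proportional, their common orthogonal space (for the bilinear
  pairing) is the line spanned by \<open>a \<times> b\<close>; a vector on that line that is Hermitian-orthogonal
  to another nonzero vector \<open>u\<close> on it must vanish.\<close>

lemma transversal_kernel_trivial:
  assumes "cdot a u = 0" "cdot b u = 0" "u \<noteq> (0, 0, 0)"
    and "cdot a h = 0" "cdot b h = 0" "cinner u h = 0"
    and "b \<noteq> (0, 0, 0)" "\<forall>c. a \<noteq> cscale c b"
  shows "h = (0, 0, 0)"
proof -
  have n: "ccross a b \<noteq> (0, 0, 0)" using ccross_eq_0_imp_parallel assms(7,8) by blast
  obtain \<mu> where \<mu>: "u = cscale \<mu> (ccross a b)"
    using ccross_eq_0_imp_parallel [OF ccross_ccross_eq_0 [OF assms(1,2)] n] by blast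
  obtain \<nu> where \<nu>: "h = cscale \<nu> (ccross a b)"
    using ccross_eq_0_imp_parallel [OF ccross_ccross_eq_0 [OF assms(4,5)] n] by blast
  have "\<mu> \<noteq> 0" using assms(3) \<mu> by (cases "ccross a b") (auto simp: cscale_def)
  moreover have "cnj \<mu> * \<nu> * cinner (ccross a b) (ccross a b) = 0"
    using assms(6) \<mu> \<nu> by (simp add: cinner_cscale cinner_cscale_left mult_ac)
  ultimately have "\<nu> = 0" using n by (simp add: cinner_self_eq_0_iff)
  then show ?thesis using \<nu> by (cases "ccross a b") (simp add: cscale_def)
qed

lemma tendsto_cinner: "(cinner u \<longlongrightarrow> cinner u u) (at u)"
  using cinner_has_derivative has_derivative_continuous continuous_at by blast

lemma tendsto_cscale_normalize:
  assumes "cinner u u \<noteq> 0"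
  shows "((\<lambda>w. cscale (cinner u u / cinner u w) w) \<longlongrightarrow> u) (at u)"
proof -
  have "((\<lambda>w. (cinner u u / cinner u w * fst w, cinner u u / cinner u w * fst (snd w),
      cinner u u / cinner u w * snd (snd w))) \<longlongrightarrow> (cinner u u / cinner u u * fst u,
      cinner u u / cinner u u * fst (snd u), cinner u u / cinner u u * snd (snd u))) (at u)"
    by (intro tendsto_intros tendsto_cinner assms tendsto_ident_at)
  then show ?thesis using assms by (simp add: cscale_def case_prod_unfold)
qed

text \<open>The proof applies the injectivity of the derivative to
  \<open>w \<mapsto> (F w, G w, \<langle>u, w\<rangle>)\<close>, whose last component fixes the scale, and normalises
  \<open>w\<close> so that \<open>\<langle>u, w\<rangle> = \<langle>u, u\<rangle>\<close>.\<close>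

lemma transversal_common_zero_isolated:
  assumes "heval d F u = 0" "heval d G u = 0" "u \<noteq> (0, 0, 0)"
    and "hgrad d G u \<noteq> (0, 0, 0)" "\<forall>c. hgrad d F u \<noteq> cscale c (hgrad d G u)"
  shows "\<forall>\<^sub>F w in at u. heval d F w = 0 \<and> heval d G w = 0 \<longrightarrow> (\<exists>c. w = cscale c u)"
proof -
  define \<Phi> where "\<Phi> w = (heval d F w, heval d G w, cinner u w)" for w
  have "(\<Phi> has_derivative (\<lambda>h. (cdot (hgrad d F u) h, cdot (hgrad d G u) h, cinner u h))) (at u)"
    unfolding \<Phi>_def by (intro has_derivative_Pair heval_has_derivative cinner_has_derivative)
  moreover have "h = 0" if "(cdot (hgrad d F u) h, cdot (hgrad d G u) h, cinner u h) = 0" for h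
    using transversal_kernel_trivial [of "hgrad d F u" u "hgrad d G u" h] that assms
    by (simp add: euler_identity zero_prod_def)
  ultimately have isolated: "\<forall>\<^sub>F w in nhds u. \<Phi> w = \<Phi> u \<longrightarrow> w = u"
    by (rule has_derivative_injective_imp_isolated)
  define N where "N w = cscale (cinner u u / cinner u w) w" for w
  have uu: "cinner u u \<noteq> 0" using assms(3) by (simp add: cinner_self_eq_0_iff)
  then have "(N \<longlongrightarrow> u) (at u)" unfolding N_def by (rule tendsto_cscale_normalize)
  with isolated have "\<forall>\<^sub>F w in at u. \<Phi> (N w) = \<Phi> u \<longrightarrow> N w = u"
    by (rule eventually_compose_filterlim)
  moreover have "\<forall>\<^sub>F w in at u. cinner u w \<noteq> 0"
    using tendsto_cinner uu by (rule tendsto_imp_eventually_ne)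
  ultimately show ?thesis
  proof eventually_elim
    case (elim w)
    show ?case
    proof
      assume "heval d F w = 0 \<and> heval d G w = 0"
      then have "\<Phi> (N w) = \<Phi> u"
        using elim(2) uu assms(1,2) by (simp add: \<Phi>_def N_def heval_cscale cinner_cscale)
      then have "N w = u" using elim(1) by blast
      then have "cscale (cinner u w / cinner u u) (N w) = cscale (cinner u w / cinner u u) u" by simp
      then show "\<exists>c. w = cscale c u" using elim(2) uu by (auto simp: N_def)
    qed
  qed
qed

lemma zero_loci_inter_subset_sphere:
  "zero_locus d F \<inter> zero_locus d G \<subseteq> proj_point ` {w. norm w = 1 \<and> heval d F w = 0 \<and> heval d G w = 0}"
proof
  fix p assume p: "p \<in> zero_locus d F \<inter> zero_locus d G"
  then obtain v where v: "p = proj_point v" "v \<noteq> (0, 0, 0)" unfolding zero_locus_def by blast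
  then have "heval d F v = 0" "heval d G v = 0"
    using p heval_eq_0_if_in_zero_locus by blast+
  define w where "w = cscale (complex_of_real (1 / norm v)) v"
  have "norm v \<noteq> 0" using v(2) by (simp flip: zero_prod_def)
  then have "norm w = 1" "heval d F w = 0" "heval d G w = 0" "p = proj_point w"
    using \<open>heval d F v = 0\<close> \<open>heval d G v = 0\<close> v(1)
    by (simp_all add: w_def norm_cscale heval_cscale proj_point_cscale norm_divide)
  then show "p \<in> proj_point ` {w. norm w = 1 \<and> heval d F w = 0 \<and> heval d G w = 0}" by blast
qed

lemma finite_transversal_intersection:
  assumes "\<forall>v. v \<noteq> (0, 0, 0) \<and> heval d G v = 0 \<longrightarrow> hgrad d G v \<noteq> (0, 0, 0)"
    and "\<forall>v. v \<noteq> (0, 0, 0) \<and> heval d F v = 0 \<and> heval d G v = 0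
      \<longrightarrow> (\<forall>c. hgrad d F v \<noteq> cscale c (hgrad d G v))"
  shows "finite (zero_locus d F \<inter> zero_locus d G)"
proof -
  define K where "K = {w. norm w = 1 \<and> heval d F w = 0 \<and> heval d G w = 0}"
  have "compact K"
  proof -
    have "K = sphere 0 1 \<inter> ({w. heval d F w = 0} \<inter> {w. heval d G w = 0})"
      unfolding K_def by auto
    moreover have "closed ({w. heval d F w = 0} \<inter> {w. heval d G w = 0})"
      by (intro closed_Int closed_Collect_eq continuous_on_heval continuous_on_const)
    ultimately show ?thesis by (simp add: compact_Int_closed)
  qed
  moreover have "\<forall>\<^sub>F w in at u. w \<in> K \<longrightarrow> proj_point w = proj_point u" if "u \<in> K" for u
  proof -
    have u: "u \<noteq> (0, 0, 0)" "heval d F u = 0" "heval d G u = 0"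
      using that by (auto simp: K_def simp flip: zero_prod_def)
    moreover have "hgrad d G u \<noteq> (0, 0, 0)" "\<forall>c. hgrad d F u \<noteq> cscale c (hgrad d G u)"
      using assms u by blast+
    ultimately have "\<forall>\<^sub>F w in at u. heval d F w = 0 \<and> heval d G w = 0 \<longrightarrow> (\<exists>c. w = cscale c u)"
      by (intro transversal_common_zero_isolated)
    then show ?thesis
    proof (rule eventually_mono)
      fix w assume w: "heval d F w = 0 \<and> heval d G w = 0 \<longrightarrow> (\<exists>c. w = cscale c u)"
      show "w \<in> K \<longrightarrow> proj_point w = proj_point u"
      proof
        assume "w \<in> K"
        then obtain c where c: "w = cscale c u" using w by (auto simp: K_def)
        then have "c \<noteq> 0" using \<open>w \<in> K\<close> by (auto simp: K_def norm_cscale)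
        then show "proj_point w = proj_point u" using c by (simp add: proj_point_cscale)
      qed
    qed
  qed
  ultimately have "finite (proj_point ` K)" by (rule finite_image_if_locally_constant)
  moreover have "zero_locus d F \<inter> zero_locus d G \<subseteq> proj_point ` K"
    unfolding K_def by (rule zero_loci_inter_subset_sphere)
  ultimately show ?thesis by (rule finite_subset [rotated])
qed

section \<open>Induced cycles in incidence graphs\<close>

definition incidence_adj :: "'p set \<Rightarrow> nat \<Rightarrow> ('p \<Rightarrow> nat \<Rightarrow> bool) \<Rightarrow> 'p + nat \<Rightarrow> 'p + nat \<Rightarrow> bool" where
  "incidence_adj P k on u w \<longleftrightarrow>
     (\<exists>p j. p \<in> P \<and> j < k \<and> on p j \<and> (u = Inl p \<and> w = Inr j \<or> u = Inr j \<and> w = Inl p))"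

lemma incidence_adj_simps [simp]:
  "incidence_adj P k on (Inl p) (Inr j) \<longleftrightarrow> p \<in> P \<and> j < k \<and> on p j"
  "incidence_adj P k on (Inr j) (Inl p) \<longleftrightarrow> p \<in> P \<and> j < k \<and> on p j"
  "\<not> incidence_adj P k on (Inl p) (Inl q)"
  "\<not> incidence_adj P k on (Inr i) (Inr j)"
  unfolding incidence_adj_def by auto

lemma Suc_Suc_mod_neq:
  assumes "3 \<le> k" "a < k"
  shows "Suc (Suc a mod k) mod k \<noteq> a"
  using assms by (auto simp: mod_Suc split: if_splits)

lemma even_mod_double: "even (x mod (2 * k)) \<longleftrightarrow> even (x::nat)"
  by (metis dvd_mod_iff dvd_triv_left)

lemma Suc_Suc_double_mod_double: "Suc (Suc (2 * a)) mod (2 * k) = 2 * (Suc a mod k)"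
proof -
  have "Suc (Suc (2 * a)) = 2 * Suc a" by simp
  then show ?thesis by (simp only: mult_mod_right)
qed

lemma inj_on_cyclic_chain:
  assumes "3 \<le> k"
    and on: "\<And>a b. a < k \<Longrightarrow> b < k \<Longrightarrow> on (pt a) b \<longleftrightarrow> b = a \<or> b = Suc a mod k"
  shows "inj_on pt {..<k}"
proof (rule inj_onI, rule ccontr)
  fix a b assume ab: "a \<in> {..<k}" "b \<in> {..<k}" "pt a = pt b" "a \<noteq> b"
  have "on (pt a) a" "on (pt b) b" using on [of a a] on [of b b] ab(1,2) by simp_all
  then have "on (pt b) a" "on (pt a) b" using ab(3) by simp_all
  then have "a = Suc b mod k" "b = Suc a mod k" using on [of b a] on [of a b] ab(1,2,4) by simp_all
  then show False using Suc_Suc_mod_neq [OF assms(1), of a] ab(1) by simp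
qed

lemma incidence_graph_has_induced_cycle:
  assumes "3 \<le> k"
    and pt: "\<And>a. a < k \<Longrightarrow> pt a \<in> P"
    and on: "\<And>a b. a < k \<Longrightarrow> b < k \<Longrightarrow> on (pt a) b \<longleftrightarrow> b = a \<or> b = Suc a mod k"
  shows "has_induced_cycle (Inl ` P \<union> Inr ` {..<k}) (incidence_adj P k on) (2 * k)"
proof -
  define v where "v n = (if even n then Inr (n div 2) else Inl (pt (n div 2)))" for n
  define vs where "vs = map v [0..<2 * k]"
  have "inj_on pt {..<k}" using assms(1) on by (rule inj_on_cyclic_chain)
  have "inj_on v {..<2 * k}"
  proof (rule inj_onI)
    fix n m assume nm: "n \<in> {..<2 * k}" "m \<in> {..<2 * k}" "v n = v m"
    then have "even n \<longleftrightarrow> even m" by (auto simp: v_def split: if_splits)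
    moreover have "n div 2 = m div 2"
      using nm \<open>inj_on pt {..<k}\<close> by (auto simp: v_def inj_on_def split: if_splits)
    ultimately show "n = m" by (metis odd_two_times_div_two_succ dvd_mult_div_cancel)
  qed
  then have "distinct vs" by (simp add: vs_def distinct_map atLeast0LessThan)
  moreover have "set vs \<subseteq> Inl ` P \<union> Inr ` {..<k}"
    using pt by (auto simp: vs_def v_def)
  moreover have "incidence_adj P k on (v n) (v m) \<longleftrightarrow> m = Suc n mod (2 * k) \<or> n = Suc m mod (2 * k)"
    if "n < 2 * k" "m < 2 * k" for n m
  proof -
    have adj_pt: "incidence_adj P k on (Inl (pt a)) (Inr b) \<longleftrightarrow>
        2 * b = Suc (Suc (2 * a)) mod (2 * k) \<or> Suc (2 * a) = Suc (2 * b) mod (2 * k)"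
      if "a < k" "b < k" for a b
      using that pt on Suc_Suc_double_mod_double [of a k] by auto
    consider "even n" "even m" | "odd n" "odd m" | "odd n" "even m" | "even n" "odd m" by blast
    then show ?thesis
    proof cases
      case 1
      then show ?thesis using even_mod_double [of "Suc n" k] even_mod_double [of "Suc m" k] by (auto simp: v_def)
    next
      case 2
      then show ?thesis using even_mod_double [of "Suc n" k] even_mod_double [of "Suc m" k] by (auto simp: v_def)
    next
      case 3
      then obtain a b where "n = Suc (2 * a)" "m = 2 * b" by (auto elim!: oddE evenE)
      then show ?thesis using adj_pt [of a b] that by (simp add: v_def)
    next
      case 4
      then obtain a b where "n = 2 * b" "m = Suc (2 * a)" by (auto elim!: oddE evenE)
      then show ?thesis using adj_pt [of a b] that by (auto simp: v_def)
    qed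
  qed
  ultimately show ?thesis
    unfolding has_induced_cycle_def using assms(1) by (intro conjI exI [of _ vs]) (auto simp: vs_def)
qed

section \<open>Arrangements without triple points\<close>

lemma zero_loci_meet:
  assumes "0 < d"
  shows "zero_locus d F \<inter> zero_locus d G \<noteq> {}"
proof -
  obtain v where "v \<noteq> (0, 0, 0)" "heval d F v = 0" "heval d G v = 0"
    using plane_curves_meet [OF assms] by blast
  then have "proj_point v \<in> zero_locus d F \<inter> zero_locus d G" unfolding zero_locus_def by blast
  then show ?thesis by blast
qed

lemma finite_arr_sing:
  assumes "d_arrangement d k F"
  shows "finite (arr_sing d k F)"
proof -
  have "arr_sing d k F = (\<Union>i<k. \<Union>j\<in>{j. j < k \<and> j \<noteq> i}. zero_locus d (F i) \<inter> zero_locus d (F j))"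
    unfolding arr_sing_def by blast
  moreover have "finite (zero_locus d (F i) \<inter> zero_locus d (F j))" if "i < k" "j < k" "i \<noteq> j" for i j
    using assms that unfolding d_arrangement_def smooth_curve_def by (intro finite_transversal_intersection) blast+
  ultimately show ?thesis by (simp only:) (intro finite_UN_I; simp)
qed

lemma curves_through_double_point:
  assumes "finite (arr_sing d k F)" and "\<forall>r>2. arr_t d k F r = 0"
    and "i < k" "j < k" "i \<noteq> j" "p \<in> zero_locus d (F i)" "p \<in> zero_locus d (F j)"
  shows "{l. l < k \<and> p \<in> zero_locus d (F l)} = {i, j}"
proof -
  let ?L = "{l. l < k \<and> p \<in> zero_locus d (F l)}"
  have p: "p \<in> arr_sing d k F" unfolding arr_sing_def using assms(3-7) by blast
  have sub: "{i, j} \<subseteq> ?L" using assms(3,4,6,7) by simp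
  have "card ?L \<le> 2"
  proof (rule ccontr)
    assume "\<not> card ?L \<le> 2"
    moreover have "p \<in> {q \<in> arr_sing d k F. arr_mult d k F q = card ?L}"
      using p by (simp add: arr_mult_def)
    then have "arr_t d k F (card ?L) \<noteq> 0"
      unfolding arr_t_def using assms(1) card_0_eq by (metis (no_types, lifting) empty_iff finite_subset mem_Collect_eq subsetI)
    ultimately show False using assms(2) by simp
  qed
  also have "2 = card {i, j}" using assms(5) by simp
  finally show ?thesis using card_seteq [OF _ sub] by simp
qed

lemma cyclic_chain_of_double_points:
  assumes "0 < d" "2 \<le> k" "finite (arr_sing d k F)" "\<forall>r>2. arr_t d k F r = 0"
  obtains pt where "\<And>a. a < k \<Longrightarrow> pt a \<in> arr_sing d k F"
    and "\<And>a b. a < k \<Longrightarrow> b < k \<Longrightarrow> pt a \<in> zero_locus d (F b) \<longleftrightarrow> b = a \<or> b = Suc a mod k"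
proof -
  define Z where "Z i = zero_locus d (F i)" for i
  define pt where "pt a = (SOME p. p \<in> Z a \<inter> Z (Suc a mod k))" for a
  have pt: "pt a \<in> Z a \<inter> Z (Suc a mod k)" for a
    unfolding pt_def Z_def using zero_loci_meet [OF assms(1)] by (metis some_in_eq)
  have Suc_mod: "Suc a mod k < k" "Suc a mod k \<noteq> a" if "a < k" for a
    using that assms(2) by (auto simp: mod_Suc)
  show ?thesis
  proof
    show "pt a \<in> arr_sing d k F" if "a < k" for a
      using pt [of a] Suc_mod [OF that] that unfolding arr_sing_def Z_def by blast
    show "pt a \<in> zero_locus d (F b) \<longleftrightarrow> b = a \<or> b = Suc a mod k" if "a < k" "b < k" for a b
      using curves_through_double_point [OF assms(3,4) that(1) Suc_mod(1) Suc_mod(2) [symmetric]]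
        pt [of a] that unfolding Z_def by blast
  qed
qed

theorem theorem5p3:
  fixes d k :: nat and F :: "nat \<Rightarrow> hpoly"
  assumes "d_arrangement d k F"
    and "k \<ge> 4"
    and "arr_t d k F 2 \<noteq> 0"
    and "\<forall>r>2. arr_t d k F r = 0"
  shows "has_induced_cycle (levi_verts d k F) (levi_adj d k F) (2 * k)"
proof -
  have "0 < d" using assms(1) by (simp add: d_arrangement_def)
  moreover have "2 \<le> k" using assms(2) by simp
  ultimately obtain pt where pt_sing: "\<And>a. a < k \<Longrightarrow> pt a \<in> arr_sing d k F"
    and pt_on: "\<And>a b. a < k \<Longrightarrow> b < k \<Longrightarrow> pt a \<in> zero_locus d (F b) \<longleftrightarrow> b = a \<or> b = Suc a mod k"
    using cyclic_chain_of_double_points [OF _ _ finite_arr_sing [OF assms(1)] assms(4)] by blast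
  have "has_induced_cycle (Inl ` arr_sing d k F \<union> Inr ` {..<k})
      (incidence_adj (arr_sing d k F) k (\<lambda>p j. p \<in> zero_locus d (F j))) (2 * k)"
    using assms(2)
    by (intro incidence_graph_has_induced_cycle [where pt = pt and on = "\<lambda>p j. p \<in> zero_locus d (F j)"]
        pt_sing pt_on) simp_all
  moreover have "levi_adj d k F = incidence_adj (arr_sing d k F) k (\<lambda>p j. p \<in> zero_locus d (F j))"
    unfolding levi_adj_def incidence_adj_def by blast
  ultimately show ?thesis by (simp add: levi_verts_def)
qed

end
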